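(* Let $d\ge k\ge1$, $A\in\mathbb{R}^{d\times k}$ with $A^TA=I_k$, $\beta\in(0,1)$, and $\theta^*=\sqrt{1-\beta}\,AA^T$. Let $m\in\{0,1\}^d$ be a mask and put $\lambda_{\max}:=\|AA^TD(m)\|$ (spectral norm). Let $x_0\in\mathbb{R}^d$ be any point in the column space of $A$ (the known image), and let $x_1\in\mathbb{R}^d$ be arbitrary (e.g. a draw from $\mathcal N(0,I_d)$). Define the resampling iterates $$x_0^{(0)}=\tfrac{1}{\sqrt{1-\beta}}\theta^*x_1=AA^Tx_1,\qquad x_0^{(r)}=\tfrac{1}{\sqrt{1-\beta}}\theta^*\big(D(m)\,x_0^{(r-1)}+D(\mathbf 1-m)\,x_0\big)\quad(r\ge1).$$ Then for every $r\ge 0$, $$\|x_0^{(r)}-x_0\|\le \lambda_{\max}^r\,\frac{\|\theta^*\|\,\|x_1-x_0\|}{\sqrt{1-\beta}}.$$ Consequently, if $0<\lambda_{\max}<1$ (in particular $AA^TD(m)\prec I_d$ in the sense $\lambda_{\max}<1$) and $\epsilon>0$, then $\|x_0^{(r)}-x_0\|\le\epsilon$ for all $$r\ \ge\ \frac{\log\!\Big(\frac{\|\theta^*\|\,\|x_1-x_0\|}{\epsilon\sqrt{1-\beta}}\Big)}{\log(1/\lambda_{\max})},$$ i.e. the number of resampling steps needed for an $\epsilon$-accurate inpainting is $\mathcal O\big(\log(\|\theta^*\|\|x_1-x_0\|/(\epsilon\sqrt{1-\beta}))/\log(1/\lambda_{\max})\big)$, independently of which valid mask $m$ is used. *)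

theory Defs
  imports "HOL-Analysis.Analysis"
begin

definition diag_mat :: "real^'n \<Rightarrow> real^'n^'n" where
  "diag_mat v = (\<chi> i j. if i = j then v $ i else 0)"

definition spec_norm :: "real^'n^'m \<Rightarrow> real" where
  "spec_norm M = onorm (\<lambda>x. M *v x)"

end

theory Submission
  imports Defs
begin

text \<open>
  Since \<open>A\<^sup>T A = I\<close>, the matrix \<open>P = A A\<^sup>T\<close> is the orthogonal projection onto the column
  space of \<open>A\<close> and fixes \<open>x0\<close>. The known pixels \<open>D(1 - m) x0\<close> therefore cancel from the error,
  which obeys the linear recursion \<open>X (r + 1) - x0 = P D(m) (X r - x0)\<close>; it contracts by the
  factor \<open>\<parallel>P D(m)\<parallel>\<close> per step, starting from \<open>\<parallel>P (x1 - x0)\<parallel> \<le> \<parallel>\<theta>\<^sup>*\<parallel> \<parallel>x1 - x0\<parallel> / sqrt (1 - \<beta>)\<close>.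
  Taking logarithms in \<open>\<parallel>P D(m)\<parallel>\<^sup>r C \<le> \<epsilon>\<close> gives the step count.
\<close>

lemma norm_matrix_vector_le_spec_norm: "norm (M *v x) \<le> spec_norm M * norm x"
  unfolding spec_norm_def using onorm[OF matrix_vector_mul_bounded_linear] by blast

lemma spec_norm_nonneg: "0 \<le> spec_norm M"
  unfolding spec_norm_def using onorm_pos_le[OF matrix_vector_mul_bounded_linear] by blast

lemma diag_mat_mult_vector: "diag_mat v *v x = (\<chi> i. v $ i * x $ i)"
  unfolding diag_mat_def
  by (simp add: vec_eq_iff matrix_vector_mult_def if_distrib if_distribR cong: if_cong)

lemma scaleR_matrix_vector_cancel:
  fixes P :: "real^'n^'m"
  assumes "s \<noteq> 0"
  shows "(1 / s) *\<^sub>R ((s *\<^sub>R P) *v v) = P *v v"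
  using assms by (simp flip: scaleR_matrix_vector_assoc)

lemma norm_matrix_vector_le_spec_norm_scaleR:
  fixes P :: "real^'n^'m"
  assumes "0 < s"
  shows "norm (P *v v) \<le> spec_norm (s *\<^sub>R P) * norm v / s"
proof -
  have "norm (P *v v) = norm ((s *\<^sub>R P) *v v) / s"
    using assms by (simp flip: scaleR_matrix_vector_assoc)
  also have "\<dots> \<le> spec_norm (s *\<^sub>R P) * norm v / s"
    using assms by (intro divide_right_mono norm_matrix_vector_le_spec_norm) simp
  finally show ?thesis .
qed

lemma projection_fixes_column_space:
  fixes A :: "real^'k^'d"
  assumes "transpose A ** A = mat 1"
  shows "(A ** transpose A) *v (A *v y) = A *v y"
  by (simp add: matrix_vector_mul_assoc assms flip: matrix_mul_assoc)

lemma masked_update_error: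
  fixes P :: "real^'n^'n"
  assumes "P *v x0 = x0"
  shows "P *v (diag_mat m *v x + diag_mat (1 - m) *v x0) - x0 = (P ** diag_mat m) *v (x - x0)"
proof -
  have "diag_mat m *v x + diag_mat (1 - m) *v x0 - x0 = diag_mat m *v (x - x0)"
    by (simp add: diag_mat_mult_vector vec_eq_iff algebra_simps)
  then show ?thesis
    using assms by (metis matrix_vector_mul_assoc matrix_vector_mult_diff_distrib)
qed

lemma norm_le_power_of_contraction:
  fixes e :: "nat \<Rightarrow> 'a::real_normed_vector"
  assumes "0 \<le> L" and "\<And>r. norm (e (Suc r)) \<le> L * norm (e r)"
  shows "norm (e r) \<le> L ^ r * norm (e 0)"
proof (induction r)
  case (Suc r)
  have "norm (e (Suc r)) \<le> L * norm (e r)" by (rule assms(2))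
  also have "\<dots> \<le> L * (L ^ r * norm (e 0))" using Suc assms(1) by (rule mult_left_mono)
  finally show ?case by simp
qed simp

lemma power_mult_le_if_log_bound:
  fixes L C \<epsilon> :: real
  assumes "0 < L" "L < 1" "0 < \<epsilon>" "0 \<le> C"
    and "ln (C / \<epsilon>) / ln (1 / L) \<le> real r"
  shows "L ^ r * C \<le> \<epsilon>"
proof (cases "C = 0")
  case False
  then have "0 < C" using assms(4) by simp
  have "0 < ln (1 / L)" using assms(1,2) by simp
  then have "ln (C / \<epsilon>) \<le> real r * ln (1 / L)" using assms(5) by (simp add: pos_divide_le_eq)
  also have "\<dots> = - ln (L ^ r)" using assms(1) by (simp add: ln_realpow ln_div)
  finally have "ln (L ^ r * C) \<le> ln \<epsilon>"
    using \<open>0 < C\<close> assms(1,3) by (simp add: ln_div ln_mult)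
  then show ?thesis using \<open>0 < C\<close> assms(1,3) by simp
qed (use assms(3) in simp)

theorem theorem2:
  fixes A :: "real^'k^'d" and \<beta> :: real and m :: "real^'d"
    and x0 x1 :: "real^'d" and X :: "nat \<Rightarrow> real^'d"
  assumes "CARD('k) \<le> CARD('d)"
    and "transpose A ** A = mat 1"
    and "0 < \<beta>" and "\<beta> < 1"
    and "\<forall>i. m $ i \<in> {0, 1}"
    and "\<exists>y. x0 = A *v y"
    and "X 0 = (1 / sqrt (1 - \<beta>)) *\<^sub>R ((sqrt (1 - \<beta>) *\<^sub>R (A ** transpose A)) *v x1)"
    and "\<forall>r. X (Suc r) = (1 / sqrt (1 - \<beta>)) *\<^sub>R
           ((sqrt (1 - \<beta>) *\<^sub>R (A ** transpose A)) *v
             (diag_mat m *v X r + diag_mat (1 - m) *v x0))"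
  shows "(\<forall>r. norm (X r - x0) \<le>
            spec_norm (A ** transpose A ** diag_mat m) ^ r *
            spec_norm (sqrt (1 - \<beta>) *\<^sub>R (A ** transpose A)) * norm (x1 - x0) / sqrt (1 - \<beta>))
       \<and> (\<forall>\<epsilon>>0. 0 < spec_norm (A ** transpose A ** diag_mat m) \<and>
                  spec_norm (A ** transpose A ** diag_mat m) < 1 \<longrightarrow>
            (\<forall>r::nat. real r \<ge>
                 ln (spec_norm (sqrt (1 - \<beta>) *\<^sub>R (A ** transpose A)) * norm (x1 - x0)
                     / (\<epsilon> * sqrt (1 - \<beta>)))
                 / ln (1 / spec_norm (A ** transpose A ** diag_mat m))
               \<longrightarrow> norm (X r - x0) \<le> \<epsilon>))"
proof -
  define s P where "s = sqrt (1 - \<beta>)" and "P = A ** transpose A"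
  define L C where "L = spec_norm (P ** diag_mat m)"
    and "C = spec_norm (s *\<^sub>R P) * norm (x1 - x0) / s"
  have "0 < s" using assms(4) by (simp add: s_def)
  have "P *v x0 = x0"
    using assms(6) projection_fixes_column_space[OF assms(2)] by (auto simp: P_def)
  have "X 0 - x0 = P *v (x1 - x0)"
    using assms(7) \<open>P *v x0 = x0\<close> \<open>0 < s\<close>
    by (simp add: scaleR_matrix_vector_cancel matrix_vector_mult_diff_distrib s_def P_def)
  then have "norm (X 0 - x0) \<le> C"
    unfolding C_def using norm_matrix_vector_le_spec_norm_scaleR[OF \<open>0 < s\<close>] by simp
  moreover have "norm (X (Suc r) - x0) \<le> L * norm (X r - x0)" for r
    using assms(8) masked_update_error[OF \<open>P *v x0 = x0\<close>] \<open>0 < s\<close>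
      norm_matrix_vector_le_spec_norm[of "P ** diag_mat m"]
    by (simp add: scaleR_matrix_vector_cancel s_def P_def L_def)
  ultimately have decay: "norm (X r - x0) \<le> L ^ r * C" for r
    using norm_le_power_of_contraction[of L "\<lambda>r. X r - x0" r] spec_norm_nonneg[of "P ** diag_mat m"]
    by (simp add: L_def order_trans mult_left_mono)
  have "0 \<le> C" unfolding C_def using \<open>0 < s\<close> by (simp add: spec_norm_nonneg)
  have log_bound: "ln (spec_norm (s *\<^sub>R P) * norm (x1 - x0) / (\<epsilon> * s)) = ln (C / \<epsilon>)"
    if "0 < \<epsilon>" for \<epsilon>
    using that \<open>0 < s\<close> by (simp add: C_def field_simps)
  show ?thesis
  proof (intro conjI allI impI)
    show "norm (X r - x0) \<le> spec_norm (A ** transpose A ** diag_mat m) ^ r *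
            spec_norm (sqrt (1 - \<beta>) *\<^sub>R (A ** transpose A)) * norm (x1 - x0) / sqrt (1 - \<beta>)" for r
      using decay[of r] by (simp add: L_def C_def s_def P_def mult.assoc)
  next
    fix \<epsilon> :: real and r :: nat
    assume "0 < \<epsilon>" and "0 < spec_norm (A ** transpose A ** diag_mat m) \<and>
      spec_norm (A ** transpose A ** diag_mat m) < 1" and "real r \<ge>
      ln (spec_norm (sqrt (1 - \<beta>) *\<^sub>R (A ** transpose A)) * norm (x1 - x0) / (\<epsilon> * sqrt (1 - \<beta>)))
        / ln (1 / spec_norm (A ** transpose A ** diag_mat m))"
    then have "L ^ r * C \<le> \<epsilon>"
      using \<open>0 \<le> C\<close> log_bound[of \<epsilon>]
      by (intro power_mult_le_if_log_bound) (simp_all add: L_def s_def P_def)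
    then show "norm (X r - x0) \<le> \<epsilon>" using decay[of r] by simp
  qed
qed

end
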